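(* Let $E\in\mathscr K$ with endpoints $l,r$ and associated interval $I$. (1) A function $\mathbf s$ on $E$ belongs to $\mathscr S$ if and only if there is a unique (up to Lebesgue-null sets) $G\in\mathscr H$ such that $\mathbf s(x)=\mathbf s(e)+\int_e^x 1_{G\cup(I\setminus E)}(y)\,dy$ for $x\in E$, where $e\in E$ is an arbitrary fixed point. (2) A function $\bar{\mathbf s}$ on $I$ belongs to $\overline{\mathscr S}$ if and only if there is a unique (up to Lebesgue-null sets) $\bar G\in\overline{\mathscr H}$ such that $\bar{\mathbf s}(x)=\bar{\mathbf s}(e)+\int_e^x 1_{\bar G}(y)\,dy$ for $x\in I$, where $e\in I$ is an arbitrary fixed point. (3) In this notation, if $\bar{\mathbf s}\in\overline{\mathscr S}$ is the extended scale function of $\mathbf s\in\mathscr S$, then $\bar G=G\cup(I\setminus E)$ and $G=\bar G\cap E$.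
   Context: $\mathscr K$ is the family of $E\subset\mathbb R$ with $E\cup\{l,r\}$ closed in $[-\infty,\infty]$, $l=\inf E<r=\sup E$. $I$ is the interval with endpoints $l,r$ containing $l$ (resp. $r$) iff $l\in E$ (resp. $r\in E$); $I\setminus E=\bigcup_k(a_k,b_k)$ disjoint open intervals. For a continuous strictly increasing $\mathbf s$ on $E$, its extended scale function $\bar{\mathbf s}$ equals $\mathbf s$ on $E$ and is linear on each $(a_k,b_k)$ interpolating $\mathbf s(a_k),\mathbf s(b_k)$. $\overline{\mathscr S}$ is the set of absolutely continuous strictly increasing functions $\bar{\mathbf s}$ on $I$ with $\bar{\mathbf s}'\in\{0,1\}$ a.e. and $\bar{\mathbf s}'=1$ on $I\setminus E$; $\mathscr S=\{\bar{\mathbf s}|_E:\bar{\mathbf s}\in\overline{\mathscr S}\}$. $\overline{\mathscr H}$ is the family of sets $\bar G\subset I$ with $I\setminus E\subset\bar G$ and $|\bar G\cap(c,d)|>0$ for every interval $(c,d)\subset I$ ($|\cdot|$ Lebesgue measure), and $\mathscr H=\{\bar G\cap E:\bar G\in\overline{\mathscr H}\}$; elements are regarded as Lebesgue-a.e. equivalence classes. *)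

theory Defs
  imports "HOL-Analysis.Analysis"
begin

definition lend :: "real set \<Rightarrow> ereal" where
  "lend E = Inf (ereal ` E)"

definition rend :: "real set \<Rightarrow> ereal" where
  "rend E = Sup (ereal ` E)"

definition classK :: "real set \<Rightarrow> bool" where
  "classK E \<longleftrightarrow> lend E < rend E \<and> closed (ereal ` E \<union> {lend E, rend E})"

definition intI :: "real set \<Rightarrow> real set" where
  "intI E = {x. lend E < ereal x \<and> ereal x < rend E} \<union>
            {x \<in> E. ereal x = lend E \<or> ereal x = rend E}"

definition abs_cont_on :: "real set \<Rightarrow> (real \<Rightarrow> real) \<Rightarrow> bool" where
  "abs_cont_on S f \<longleftrightarrow>
     (\<forall>\<epsilon>>0. \<exists>\<delta>>0. \<forall>(n::nat) (a::nat \<Rightarrow> real) (b::nat \<Rightarrow> real).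
        (\<forall>i<n. a i \<le> b i \<and> {a i..b i} \<subseteq> S) \<and>
        (\<forall>i<n. \<forall>j<n. i \<noteq> j \<longrightarrow> b i \<le> a j \<or> b j \<le> a i) \<and>
        (\<Sum>i<n. b i - a i) < \<delta>
        \<longrightarrow> (\<Sum>i<n. \<bar>f (b i) - f (a i)\<bar>) < \<epsilon>)"

definition loc_abs_cont_on :: "real set \<Rightarrow> (real \<Rightarrow> real) \<Rightarrow> bool" where
  "loc_abs_cont_on I f \<longleftrightarrow> (\<forall>a b. {a..b} \<subseteq> I \<longrightarrow> abs_cont_on {a..b} f)"

text \<open>The extended scale function: equal to s on E, linear on each gap (a_k,b_k)
  of I \<setminus> E, interpolating s(a_k), s(b_k).  For x in a gap, a_k and b_k are the
  nearest points of E to the left and right of x.\<close>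
definition ext_scale :: "real set \<Rightarrow> (real \<Rightarrow> real) \<Rightarrow> real \<Rightarrow> real" where
  "ext_scale E s x =
     (if x \<in> E then s x
      else (let a = Sup {y \<in> E. y < x}; b = Inf {y \<in> E. x < y}
            in s a + (s b - s a) * (x - a) / (b - a)))"

definition Sbar :: "real set \<Rightarrow> (real \<Rightarrow> real) set" where
  "Sbar E = {sb. loc_abs_cont_on (intI E) sb \<and> strict_mono_on (intI E) sb \<and>
     (AE x in lebesgue. x \<in> intI E \<longrightarrow>
        ((sb has_real_derivative 0) (at x within intI E) \<or>
         (sb has_real_derivative 1) (at x within intI E))) \<and>
     (\<forall>x \<in> intI E - E. (sb has_real_derivative 1) (at x within intI E))}"

text \<open>The class S: restrictions to E of elements of S-bar (functions are
  compared on E only).\<close>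
definition Sc :: "real set \<Rightarrow> (real \<Rightarrow> real) set" where
  "Sc E = {s. \<exists>sb \<in> Sbar E. \<forall>x \<in> E. s x = sb x}"

definition Hbar :: "real set \<Rightarrow> real set set" where
  "Hbar E = {G. G \<in> sets lebesgue \<and> G \<subseteq> intI E \<and> intI E - E \<subseteq> G \<and>
     (\<forall>c d. c < d \<and> {c<..<d} \<subseteq> intI E \<longrightarrow> emeasure lebesgue (G \<inter> {c<..<d}) > 0)}"

definition Hc :: "real set \<Rightarrow> real set set" where
  "Hc E = {G \<inter> E | G. G \<in> Hbar E}"

definition ae_eq :: "real set \<Rightarrow> real set \<Rightarrow> bool" where
  "ae_eq A B \<longleftrightarrow> (A - B) \<union> (B - A) \<in> null_sets lebesgue"

end

theory Submission
  imports Defs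
begin

text \<open>
  A function in S-bar is absolutely continuous with derivative 0 or 1 almost everywhere.  By the
  change of variables formula, together with Lusin's property (N) for monotone absolutely continuous
  functions, its increment over an interval is the measure of the part of the interval where the
  derivative is 1.  Strict monotonicity makes this set charge every subinterval of I, and it
  contains I - E because the derivative is 1 there; this is G-bar.  Conversely, the primitive of
  the indicator of any set in H-bar is 1-Lipschitz and strictly increasing, and by Lebesgue's
  density theorem its derivative is that indicator almost everywhere; the latter also gives
  uniqueness up to null sets.  Parts (1) and (3) follow because the primitive of the indicator
  of a set containing I - E is affine with slope 1 on every gap of E, hence determined by its
  values on E, and the extended scale function is exactly this affine interpolation.
\<close>

section \<open>Lebesgue's density theorem\<close>

lemma emeasure_UN_disjoint_dense_balls:
  fixes A :: "'a::euclidean_space set" and c :: "'i \<Rightarrow> 'a"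
  assumes A: "A \<in> sets lebesgue" and C: "countable C" and \<epsilon>: "\<epsilon> > 0"
    and disj: "disjoint_family_on (\<lambda>i. ball (c i) (r i)) C"
    and dense: "\<And>i. i \<in> C \<Longrightarrow> \<epsilon> * measure lebesgue (ball (c i) (r i)) \<le> measure lebesgue (A \<inter> ball (c i) (r i))"
  shows "emeasure lebesgue (\<Union>i\<in>C. ball (c i) (r i))
           \<le> ennreal (1 / \<epsilon>) * emeasure lebesgue (\<Union>i\<in>C. A \<inter> ball (c i) (r i))"
proof -
  have "disjoint_family_on (\<lambda>i. A \<inter> ball (c i) (r i)) C"
    using disj unfolding disjoint_family_on_def by blast
  then have A_balls: "emeasure lebesgue (\<Union>i\<in>C. A \<inter> ball (c i) (r i))
      = (\<integral>\<^sup>+i. emeasure lebesgue (A \<inter> ball (c i) (r i)) \<partial>count_space C)"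
    using C A by (intro emeasure_UN_countable) auto
  have "emeasure lebesgue (\<Union>i\<in>C. ball (c i) (r i)) = (\<integral>\<^sup>+i. emeasure lebesgue (ball (c i) (r i)) \<partial>count_space C)"
    using C disj by (intro emeasure_UN_countable) auto
  also have "\<dots> \<le> (\<integral>\<^sup>+i. ennreal (1 / \<epsilon>) * emeasure lebesgue (A \<inter> ball (c i) (r i)) \<partial>count_space C)"
  proof (intro nn_integral_mono)
    fix i assume "i \<in> space (count_space C)"
    then have "measure lebesgue (ball (c i) (r i)) \<le> (1 / \<epsilon>) * measure lebesgue (A \<inter> ball (c i) (r i))"
      using dense[of i] \<epsilon> by (auto simp: field_simps)
    moreover have "A \<inter> ball (c i) (r i) \<in> lmeasurable"
      using fmeasurable_Int_fmeasurable[OF lmeasurable_ball A] by (simp add: Int_commute)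
    ultimately show "emeasure lebesgue (ball (c i) (r i))
        \<le> ennreal (1 / \<epsilon>) * emeasure lebesgue (A \<inter> ball (c i) (r i))"
      using \<epsilon> by (simp add: emeasure_eq_measure2 ennreal_mult[symmetric] ennreal_leI)
  qed
  also have "\<dots> = ennreal (1 / \<epsilon>) * emeasure lebesgue (\<Union>i\<in>C. A \<inter> ball (c i) (r i))"
    using A_balls by (simp add: nn_integral_cmult)
  finally show ?thesis .
qed

lemma lmeasurable_cover_of_dense_balls:
  fixes A S U :: "'a::euclidean_space set"
  assumes A: "A \<in> sets lebesgue" and U: "open U" "bounded U" "S \<subseteq> U" and \<epsilon>: "\<epsilon> > 0"
    and dense: "\<And>x d. x \<in> S \<Longrightarrow> d > 0 \<Longrightarrow>
      \<exists>h. 0 < h \<and> h < d \<and> \<epsilon> * measure lebesgue (ball x h) \<le> measure lebesgue (A \<inter> ball x h)"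
  obtains T where "S \<subseteq> T" "T \<in> lmeasurable" "measure lebesgue T \<le> measure lebesgue (A \<inter> U) / \<epsilon>"
proof -
  define K where "K = {(x, h). x \<in> S \<and> 0 < h \<and> ball x h \<subseteq> U \<and>
    \<epsilon> * measure lebesgue (ball x h) \<le> measure lebesgue (A \<inter> ball x h)}"
  have "\<exists>i. i \<in> K \<and> x \<in> ball (fst i) (snd i) \<and> snd i < d" if x: "x \<in> S" and "0 < d" for x d
  proof -
    obtain \<rho> where "\<rho> > 0" "ball x \<rho> \<subseteq> U" using U x openE by blast
    moreover obtain h where "0 < h" "h < min d \<rho>"
        "\<epsilon> * measure lebesgue (ball x h) \<le> measure lebesgue (A \<inter> ball x h)"
      using dense[OF x, of "min d \<rho>"] \<open>0 < d\<close> \<open>\<rho> > 0\<close> by auto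
    ultimately show ?thesis
      using x by (intro exI[of _ "(x, h)"]) (auto simp: K_def)
  qed
  then obtain C where C: "countable C" "C \<subseteq> K"
      "pairwise (\<lambda>i j. disjnt (ball (fst i) (snd i)) (ball (fst j) (snd j))) C"
      "negligible (S - (\<Union>i\<in>C. ball (fst i) (snd i)))"
    using Vitali_covering_theorem_balls[of S K fst snd] by blast
  define V where "V = (\<Union>i\<in>C. ball (fst i) (snd i))"
  have ball_U: "ball (fst i) (snd i) \<subseteq> U" if "i \<in> C" for i
    using that C(2) by (cases i) (auto simp: K_def)
  then have "V \<subseteq> U"
    by (auto simp: V_def)
  then have V: "V \<in> lmeasurable"
    using U(2) by (auto simp: V_def intro: lmeasurable_open bounded_subset)
  have AU: "A \<inter> U \<in> lmeasurable"
    using fmeasurable_Int_fmeasurable[OF lmeasurable_open[OF U(2,1)] A] by (simp add: Int_commute)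
  have "emeasure lebesgue V \<le> ennreal (1 / \<epsilon>) * emeasure lebesgue (\<Union>i\<in>C. A \<inter> ball (fst i) (snd i))"
    unfolding V_def using C(1-3) A \<epsilon>
    by (intro emeasure_UN_disjoint_dense_balls) (auto simp: K_def disjoint_family_on_def pairwise_def disjnt_def)
  also have "\<dots> \<le> ennreal (1 / \<epsilon>) * emeasure lebesgue (A \<inter> U)"
    using ball_U A U by (intro mult_left_mono emeasure_mono) (auto intro: sets.Int)
  finally have "measure lebesgue V \<le> measure lebesgue (A \<inter> U) / \<epsilon>"
    using V AU \<epsilon> by (simp add: emeasure_eq_measure2 ennreal_mult[symmetric] ennreal_le_iff)
  moreover have null: "negligible (S - V)"
    using C(4) by (simp add: V_def)
  ultimately show ?thesis
    using that[of "V \<union> (S - V)"] V measure_Un_null_set[of V lebesgue "S - V"]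
      fmeasurable.Un[OF V negligible_imp_measurable[OF null]]
    by (auto simp: negligible_iff_null_sets)
qed

lemma negligible_upper_density_points:
  fixes A :: "'a::euclidean_space set"
  assumes A: "A \<in> sets lebesgue" and \<epsilon>: "\<epsilon> > 0"
  shows "negligible {x. x \<notin> A \<and> (\<forall>d>0. \<exists>h. 0 < h \<and> h < d \<and>
            \<epsilon> * measure lebesgue (ball x h) \<le> measure lebesgue (A \<inter> ball x h))}"
    (is "negligible ?S")
proof -
  have "negligible (?S \<inter> ball 0 m)" for m
    unfolding negligible_outer_le
  proof (intro allI impI)
    fix \<eta> :: real assume "\<eta> > 0"
    have "ball 0 m - A \<in> sets lebesgue" using A by auto
    then obtain U0 where U0: "open U0" "ball 0 m - A \<subseteq> U0" "U0 - (ball 0 m - A) \<in> lmeasurable"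
        "emeasure lebesgue (U0 - (ball 0 m - A)) < ennreal (\<eta> * \<epsilon>)"
      using sets_lebesgue_outer_open[of "ball 0 m - A" "\<eta> * \<epsilon>"] \<open>\<eta> > 0\<close> \<epsilon> by auto
    define U where "U = U0 \<inter> ball 0 m"
    have "A \<inter> U \<subseteq> U0 - (ball 0 m - A)" by (auto simp: U_def)
    then have "measure lebesgue (A \<inter> U) \<le> measure lebesgue (U0 - (ball 0 m - A))"
      using U0 A by (intro measure_mono_fmeasurable) (auto simp: U_def)
    also have "\<dots> \<le> \<eta> * \<epsilon>"
      using U0(3,4) \<open>\<eta> > 0\<close> \<epsilon> by (simp add: emeasure_eq_measure2 ennreal_less_iff)
    finally have AU: "measure lebesgue (A \<inter> U) / \<epsilon> \<le> \<eta>"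
      using \<epsilon> by (simp add: field_simps)
    obtain T where "?S \<inter> ball 0 m \<subseteq> T" "T \<in> lmeasurable" "measure lebesgue T \<le> measure lebesgue (A \<inter> U) / \<epsilon>"
    proof (rule lmeasurable_cover_of_dense_balls[OF A _ _ _ \<epsilon>])
      show "open U" "bounded U" "?S \<inter> ball 0 m \<subseteq> U"
        using U0(1,2) by (auto simp: U_def)
    qed auto
    then show "\<exists>T. ?S \<inter> ball 0 m \<subseteq> T \<and> T \<in> lmeasurable \<and> measure lebesgue T \<le> \<eta>"
      using AU by auto
  qed
  then have "negligible (\<Union>m::nat. ?S \<inter> ball 0 (real m))"
    by (intro negligible_Union_nat)
  moreover have "?S \<subseteq> (\<Union>m::nat. ?S \<inter> ball 0 (real m))"
  proof
    fix x assume "x \<in> ?S"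
    moreover obtain m :: nat where "norm x < m"
      using reals_Archimedean2 by blast
    ultimately show "x \<in> (\<Union>m::nat. ?S \<inter> ball 0 (real m))"
      by auto
  qed
  ultimately show ?thesis
    using negligible_subset by blast
qed

theorem AE_density_zero:
  fixes A :: "'a::euclidean_space set"
  assumes A: "A \<in> sets lebesgue"
  shows "AE x in lebesgue. x \<notin> A \<longrightarrow>
           ((\<lambda>h. measure lebesgue (A \<inter> ball x h) / measure lebesgue (ball x h)) \<longlongrightarrow> 0) (at_right 0)"
proof -
  let ?ratio = "\<lambda>x h. measure lebesgue (A \<inter> ball x h) / measure lebesgue (ball x h)"
  define S where "S n = {x. x \<notin> A \<and> (\<forall>d>0. \<exists>h. 0 < h \<and> h < d \<and>
            (1 / Suc n) * measure lebesgue (ball x h) \<le> measure lebesgue (A \<inter> ball x h))}" for n :: nat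
  have "x \<in> (\<Union>n. S n)" if "x \<notin> A" and not_zero: "\<not> (?ratio x \<longlongrightarrow> 0) (at_right 0)" for x
  proof -
    obtain e where "e > 0" and e: "\<And>b. b > 0 \<Longrightarrow> \<exists>h>0. h < b \<and> e \<le> ?ratio x h"
      using not_zero unfolding tendsto_iff eventually_at_right_field dist_real_def
      by (metis diff_zero abs_of_nonneg measure_nonneg divide_nonneg_nonneg not_less)
    obtain n :: nat where n: "1 / Suc n < e"
      using \<open>e > 0\<close> nat_approx_posE by blast
    have "(1 / Suc n) * measure lebesgue (ball x h) \<le> measure lebesgue (A \<inter> ball x h)"
      if "h > 0" "e \<le> ?ratio x h" for h
    proof -
      have pos: "measure lebesgue (ball x h) > 0"
        using content_ball_pos[OF \<open>h > 0\<close>] by simp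
      then have "(1 / Suc n) * measure lebesgue (ball x h) \<le> e * measure lebesgue (ball x h)"
        using n by (intro mult_right_mono) auto
      also have "\<dots> \<le> measure lebesgue (A \<inter> ball x h)"
        using that(2) pos by (simp add: pos_le_divide_eq)
      finally show ?thesis .
    qed
    then have "x \<in> S n"
      using e \<open>x \<notin> A\<close> unfolding S_def by blast
    then show ?thesis by blast
  qed
  moreover have "negligible (\<Union>n. S n)"
    unfolding S_def using A by (intro negligible_Union_nat negligible_upper_density_points) auto
  ultimately show ?thesis
    unfolding eventually_ae_filter negligible_iff_null_sets
    by (intro bexI[of _ "\<Union>n. S n"]) auto
qed

section \<open>Primitives of indicator functions\<close>

abbreviation indicator_primitive :: "real set \<Rightarrow> real \<Rightarrow> real \<Rightarrow> real" where
  "indicator_primitive G e x \<equiv> LINT y=ereal e..ereal x|lebesgue. indicator G y"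

lemma lmeasurable_Int_Ioo:
  fixes G :: "real set"
  shows "G \<in> sets lebesgue \<Longrightarrow> G \<inter> {a<..<b} \<in> lmeasurable"
  using fmeasurable_Int_fmeasurable[OF lmeasurable_interval(2)] by (simp add: Int_commute)

lemma measure_Int_Ioo_le:
  fixes G :: "real set"
  assumes "G \<in> sets lebesgue" "a \<le> b"
  shows "measure lebesgue (G \<inter> {a<..<b}) \<le> b - a"
proof -
  have "measure lebesgue (G \<inter> {a<..<b}) \<le> measure lebesgue {a<..<b}"
    using assms lmeasurable_Int_Ioo by (intro measure_mono_fmeasurable) auto
  then show ?thesis using assms by simp
qed

lemma measure_Int_Icc_eq_Ioo:
  fixes G :: "real set"
  assumes "G \<in> sets lebesgue"
  shows "measure lebesgue (G \<inter> {a..b}) = measure lebesgue (G \<inter> {a<..<b})"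
proof -
  have "G \<inter> {a..b} = (G \<inter> {a<..<b}) \<union> (G \<inter> {a..b} \<inter> {a, b})" by auto
  moreover have "G \<inter> {a..b} \<inter> {a, b} \<in> null_sets lebesgue"
    by (auto simp flip: negligible_iff_null_sets intro: negligible_subset[OF negligible_finite[of "{a, b}"]])
  ultimately show ?thesis
    by (metis measure_Un_null_set fmeasurableD lmeasurable_Int_Ioo assms)
qed

lemma measure_Int_Ioo_add:
  fixes G :: "real set"
  assumes G: "G \<in> sets lebesgue" and "a \<le> b" "b \<le> c"
  shows "measure lebesgue (G \<inter> {a<..<c}) = measure lebesgue (G \<inter> {a<..<b}) + measure lebesgue (G \<inter> {b<..<c})"
proof -
  have "G \<inter> {a<..<c} = ((G \<inter> {a<..<b}) \<union> (G \<inter> {b<..<c})) \<union> (G \<inter> {b} \<inter> {a<..<c})"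
    using assms by auto
  moreover have "G \<inter> {b} \<inter> {a<..<c} \<in> null_sets lebesgue"
    by (auto simp flip: negligible_iff_null_sets intro: negligible_subset[OF negligible_sing[of b]])
  ultimately have "measure lebesgue (G \<inter> {a<..<c}) = measure lebesgue ((G \<inter> {a<..<b}) \<union> (G \<inter> {b<..<c}))"
    by (metis measure_Un_null_set fmeasurableD lmeasurable_Int_Ioo G sets.Un)
  also have "\<dots> = measure lebesgue (G \<inter> {a<..<b}) + measure lebesgue (G \<inter> {b<..<c})"
    using lmeasurable_Int_Ioo[OF G, of a b] lmeasurable_Int_Ioo[OF G, of b c]
    by (intro measure_Union) (auto simp: fmeasurable_def)
  finally show ?thesis .
qed

lemma indicator_primitive_eq:
  assumes "G \<in> sets lebesgue"
  shows "indicator_primitive G e x =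
    (if e \<le> x then measure lebesgue (G \<inter> {e<..<x}) else - measure lebesgue (G \<inter> {x<..<e}))"
proof -
  have "(\<lambda>y. indicator {a<..<b} y *\<^sub>R indicator G y) = (indicator (G \<inter> {a<..<b}) :: real \<Rightarrow> real)" for a b
    by (auto simp: indicator_def fun_eq_iff)
  then show ?thesis
    using assms
    by (simp add: interval_lebesgue_integral_def set_lebesgue_integral_def einterval_eq_Icc integral_indicator)
qed

lemma indicator_primitive_self: "indicator_primitive G e e = 0"
  by (simp add: interval_lebesgue_integral_def set_lebesgue_integral_def einterval_eq_Icc)

lemma indicator_primitive_diff:
  assumes G: "G \<in> sets lebesgue" and "a \<le> b"
  shows "indicator_primitive G e b - indicator_primitive G e a = measure lebesgue (G \<inter> {a<..<b})"
  using measure_Int_Ioo_add[OF G, of a b e] measure_Int_Ioo_add[OF G, of e a b]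
    measure_Int_Ioo_add[OF G, of a e b] \<open>a \<le> b\<close>
  by (auto simp: indicator_primitive_eq[OF G])

lemma indicator_primitive_quotient_bound:
  fixes G :: "real set"
  assumes G: "G \<in> sets lebesgue" and "y \<noteq> x"
  defines "H \<equiv> if x \<in> G then - G else G"
  shows "\<bar>(indicator_primitive G e y - indicator_primitive G e x) / (y - x) - indicator G x\<bar>
           \<le> measure lebesgue (H \<inter> ball x \<bar>y - x\<bar>) / \<bar>y - x\<bar>"
proof -
  define a b where "a = min x y" and "b = max x y"
  have \<delta>: "b - a = \<bar>y - x\<bar>" "b - a > 0" and ab_ball: "{a<..<b} \<subseteq> ball x \<bar>y - x\<bar>"
    using \<open>y \<noteq> x\<close> by (auto simp: a_def b_def dist_real_def)
  have quotient: "(indicator_primitive G e y - indicator_primitive G e x) / (y - x)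
      = measure lebesgue (G \<inter> {a<..<b}) / (b - a)"
    using indicator_primitive_diff[OF G, of x y e] indicator_primitive_diff[OF G, of y x e]
    by (cases "x \<le> y") (auto simp: a_def b_def field_simps)
  have "H \<in> sets lebesgue"
    using G sets.compl_sets[OF G] by (simp add: H_def Compl_eq_Diff_UNIV)
  then have H_ball: "H \<inter> ball x \<bar>y - x\<bar> \<in> lmeasurable"
    using fmeasurable_Int_fmeasurable[OF lmeasurable_ball] by (simp add: Int_commute)
  show ?thesis
  proof (cases "x \<in> G")
    case False
    have "measure lebesgue (G \<inter> {a<..<b}) \<le> measure lebesgue (H \<inter> ball x \<bar>y - x\<bar>)"
      using False ab_ball H_ball G by (intro measure_mono_fmeasurable) (auto simp: H_def)
    then show ?thesis
      using False \<delta> by (simp add: quotient divide_right_mono)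
  next
    case True
    have "measure lebesgue ({a<..<b} - G) = measure lebesgue {a<..<b} - measure lebesgue (G \<inter> {a<..<b})"
    proof -
      have "{a<..<b} - G = {a<..<b} - G \<inter> {a<..<b}" by blast
      then show ?thesis
        using measure_Diff[of lebesgue "{a<..<b}" "G \<inter> {a<..<b}"] lmeasurable_Int_Ioo[OF G, of a b] \<delta>
        by (simp add: fmeasurable_def)
    qed
    then have "1 - measure lebesgue (G \<inter> {a<..<b}) / (b - a) = measure lebesgue ({a<..<b} - G) / (b - a)"
      using \<delta> by (simp add: field_simps)
    moreover have "measure lebesgue ({a<..<b} - G) \<le> measure lebesgue (H \<inter> ball x \<bar>y - x\<bar>)"
      using True ab_ball H_ball G by (intro measure_mono_fmeasurable) (auto simp: H_def)
    moreover have "measure lebesgue (G \<inter> {a<..<b}) / (b - a) \<le> 1"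
      using measure_Int_Ioo_le[OF G, of a b] \<delta> by simp
    ultimately show ?thesis
      using True \<delta> by (simp add: quotient divide_right_mono)
  qed
qed

lemma has_real_derivative_indicator_primitive:
  fixes G :: "real set" and x :: real
  assumes G: "G \<in> sets lebesgue"
  defines "H \<equiv> if x \<in> G then - G else G"
  assumes density: "((\<lambda>h. measure lebesgue (H \<inter> ball x h) / measure lebesgue (ball x h)) \<longlongrightarrow> 0) (at_right 0)"
  shows "(indicator_primitive G e has_real_derivative indicator G x) (at x)"
  unfolding has_field_derivative_iff tendsto_iff eventually_at
proof (intro allI impI)
  fix \<epsilon> :: real assume "\<epsilon> > 0"
  then obtain d where "d > 0" and
    d: "\<And>h. 0 < h \<Longrightarrow> h < d \<Longrightarrow> measure lebesgue (H \<inter> ball x h) / measure lebesgue (ball x h) < \<epsilon> / 2"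
    using density unfolding tendsto_iff eventually_at_right_field
    by (metis half_gt_zero dist_real_def diff_zero abs_of_nonneg measure_nonneg divide_nonneg_nonneg)
  have "dist ((indicator_primitive G e y - indicator_primitive G e x) / (y - x)) (indicator G x) < \<epsilon>"
    if "y \<noteq> x" "dist y x < d" for y
  proof -
    have "measure lebesgue (ball x \<bar>y - x\<bar>) = 2 * \<bar>y - x\<bar>"
      using that by (simp add: ball_eq_greaterThanLessThan)
    then have "measure lebesgue (H \<inter> ball x \<bar>y - x\<bar>) / \<bar>y - x\<bar> < \<epsilon>"
      using d[of "\<bar>y - x\<bar>"] that by (simp add: dist_real_def field_simps)
    then show ?thesis
      using indicator_primitive_quotient_bound[OF G that(1), of e] by (simp add: H_def dist_real_def)
  qed
  then show "\<exists>d>0. \<forall>y\<in>UNIV. y \<noteq> x \<and> dist y x < d \<longrightarrow>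
      dist ((indicator_primitive G e y - indicator_primitive G e x) / (y - x)) (indicator G x) < \<epsilon>"
    using \<open>d > 0\<close> by blast
qed

lemma AE_has_real_derivative_indicator_primitive:
  fixes G :: "real set"
  assumes G: "G \<in> sets lebesgue"
  shows "AE x in lebesgue. (indicator_primitive G e has_real_derivative indicator G x) (at x)"
proof -
  have "- G \<in> sets lebesgue"
    using sets.compl_sets[OF G] by (simp add: Compl_eq_Diff_UNIV)
  from AE_density_zero[OF G] AE_density_zero[OF this] show ?thesis
  proof eventually_elim
    case (elim x)
    then show ?case
      by (intro has_real_derivative_indicator_primitive[OF G]) auto
  qed
qed

lemma negligible_interval_minus_interior:
  fixes I :: "real set"
  assumes "is_interval I"
  shows "negligible (I - interior I)"
proof -
  have "I - interior I \<subseteq> frontier I"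
    using closure_subset by (auto simp: frontier_def)
  then show ?thesis
    using negligible_convex_frontier[OF is_interval_convex[OF assms]] negligible_subset by blast
qed

lemma ae_eq_if_indicator_primitives_eq:
  fixes G1 G2 I :: "real set"
  assumes I: "is_interval I"
    and G1: "G1 \<in> sets lebesgue" "G1 \<subseteq> I" and G2: "G2 \<in> sets lebesgue" "G2 \<subseteq> I"
    and eq: "\<And>x. x \<in> I \<Longrightarrow> indicator_primitive G1 e x = indicator_primitive G2 e x"
  shows "ae_eq G1 G2"
proof -
  have "AE x in lebesgue. x \<notin> I - interior I"
    using AE_not_in negligible_interval_minus_interior[OF I] negligible_iff_null_sets by blast
  with AE_has_real_derivative_indicator_primitive[OF G1(1), of e]
       AE_has_real_derivative_indicator_primitive[OF G2(1), of e]
  have "AE x in lebesgue. x \<notin> (G1 - G2) \<union> (G2 - G1)"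
  proof eventually_elim
    case (elim x)
    show ?case
    proof
      assume x: "x \<in> (G1 - G2) \<union> (G2 - G1)"
      then have "x \<in> interior I"
        using elim(3) G1(2) G2(2) by blast
      then have "(indicator_primitive G2 e has_real_derivative indicator G1 x) (at x)"
        using eq interior_subset
        by (intro has_field_derivative_transform_within_open[OF elim(1) open_interior]) blast+
      then have "indicator G1 x = (indicator G2 x :: real)"
        using elim(2) DERIV_unique by blast
      then show False
        using x by (auto simp: indicator_def)
    qed
  qed
  then show ?thesis
    unfolding ae_eq_def using G1(1) G2(1) by (simp add: AE_iff_null_sets sets.Un sets.Diff)
qed

section \<open>Absolutely continuous functions\<close>

lemma abs_cont_on_imp_continuous_on:
  fixes f :: "real \<Rightarrow> real"
  assumes "abs_cont_on {a..b} f"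
  shows "continuous_on {a..b} f"
  unfolding continuous_on_iff
proof (intro ballI allI impI)
  fix x \<epsilon> :: real assume x: "x \<in> {a..b}" and "\<epsilon> > 0"
  then obtain \<delta> where "\<delta> > 0" and \<delta>: "\<forall>(n::nat) l r. (\<forall>i<n. l i \<le> r i \<and> {l i..r i} \<subseteq> {a..b}) \<and>
      (\<forall>i<n. \<forall>j<n. i \<noteq> j \<longrightarrow> r i \<le> l j \<or> r j \<le> l i) \<and> (\<Sum>i<n. r i - l i) < \<delta> \<longrightarrow>
      (\<Sum>i<n. \<bar>f (r i) - f (l i)\<bar>) < \<epsilon>"
    using assms unfolding abs_cont_on_def by blast
  have "dist (f y) (f x) < \<epsilon>" if y: "y \<in> {a..b}" "dist y x < \<delta>" for y
  proof -
    have "\<bar>f (max x y) - f (min x y)\<bar> < \<epsilon>"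
      using \<delta>[rule_format, of 1 "\<lambda>_. min x y" "\<lambda>_. max x y"] x y
      by (simp add: dist_real_def) linarith
    then show ?thesis
      by (cases "x \<le> y") (simp_all add: dist_real_def abs_minus_commute max_def min_def)
  qed
  then show "\<exists>\<delta>>0. \<forall>y\<in>{a..b}. dist y x < \<delta> \<longrightarrow> dist (f y) (f x) < \<epsilon>"
    using \<open>\<delta> > 0\<close> by blast
qed

lemma abs_cont_onE_finite:
  fixes f :: "real \<Rightarrow> real"
  assumes "abs_cont_on S f" "\<epsilon> > 0"
  obtains \<delta> where "\<delta> > 0"
    "\<And>F. finite F \<Longrightarrow> (\<And>c d. (c, d) \<in> F \<Longrightarrow> c \<le> d \<and> {c..d} \<subseteq> S) \<Longrightarrow>
       (\<And>c d c' d'. (c, d) \<in> F \<Longrightarrow> (c', d') \<in> F \<Longrightarrow> (c, d) \<noteq> (c', d') \<Longrightarrow> d \<le> c' \<or> d' \<le> c) \<Longrightarrow>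
       (\<Sum>(c, d)\<in>F. d - c) < \<delta> \<Longrightarrow> (\<Sum>(c, d)\<in>F. \<bar>f d - f c\<bar>) < \<epsilon>"
proof -
  obtain \<delta> where "\<delta> > 0" and \<delta>: "\<forall>(n::nat) l r. (\<forall>i<n. l i \<le> r i \<and> {l i..r i} \<subseteq> S) \<and>
      (\<forall>i<n. \<forall>j<n. i \<noteq> j \<longrightarrow> r i \<le> l j \<or> r j \<le> l i) \<and> (\<Sum>i<n. r i - l i) < \<delta> \<longrightarrow>
      (\<Sum>i<n. \<bar>f (r i) - f (l i)\<bar>) < \<epsilon>"
    using assms unfolding abs_cont_on_def by blast
  show ?thesis
  proof (rule that[OF \<open>\<delta> > 0\<close>])
    fix F :: "(real \<times> real) set"
    assume F: "finite F" and inside: "\<And>c d. (c, d) \<in> F \<Longrightarrow> c \<le> d \<and> {c..d} \<subseteq> S"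
      and apart: "\<And>c d c' d'. (c, d) \<in> F \<Longrightarrow> (c', d') \<in> F \<Longrightarrow> (c, d) \<noteq> (c', d') \<Longrightarrow> d \<le> c' \<or> d' \<le> c"
      and small: "(\<Sum>(c, d)\<in>F. d - c) < \<delta>"
    obtain h where h: "bij_betw h {..<card F} F"
      using ex_bij_betw_nat_finite[OF F] atLeast0LessThan by metis
    have sum_h: "(\<Sum>i<card F. g (h i)) = (\<Sum>K\<in>F. g K)" for g :: "real \<times> real \<Rightarrow> real"
      using sum.reindex_bij_betw[OF h] by simp
    have hF: "h i \<in> F" if "i < card F" for i
      using h that by (auto simp: bij_betw_def)
    have h_inj: "h i \<noteq> h j" if "i < card F" "j < card F" "i \<noteq> j" for i j
      using h that by (auto simp: bij_betw_def inj_on_def)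
    have "(\<Sum>i<card F. \<bar>f (snd (h i)) - f (fst (h i))\<bar>) < \<epsilon>"
    proof (rule \<delta>[rule_format, OF conjI[OF _ conjI]])
      show "\<forall>i<card F. fst (h i) \<le> snd (h i) \<and> {fst (h i)..snd (h i)} \<subseteq> S"
        using inside hF by simp
      show "\<forall>i<card F. \<forall>j<card F. i \<noteq> j \<longrightarrow> snd (h i) \<le> fst (h j) \<or> snd (h j) \<le> fst (h i)"
      proof (intro allI impI)
        fix i j assume "i < card F" "j < card F" "i \<noteq> j"
        then show "snd (h i) \<le> fst (h j) \<or> snd (h j) \<le> fst (h i)"
          using apart[of "fst (h i)" "snd (h i)" "fst (h j)" "snd (h j)"] hF[of i] hF[of j] h_inj[of i j] by simp
      qed
      show "(\<Sum>i<card F. snd (h i) - fst (h i)) < \<delta>"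
        using small sum_h[of "\<lambda>(c, d). d - c"] by (simp add: case_prod_beta)
    qed
    then show "(\<Sum>(c, d)\<in>F. \<bar>f d - f c\<bar>) < \<epsilon>"
      using sum_h[of "\<lambda>(c, d). \<bar>f d - f c\<bar>"] by (simp add: case_prod_beta)
  qed
qed

lemma Ioo_disjoint_imp_apart:
  fixes c d c' d' :: real
  assumes "c < d" "c' < d'" "{c<..<d} \<inter> {c'<..<d'} = {}"
  shows "d \<le> c' \<or> d' \<le> c"
proof (rule ccontr)
  assume "\<not> (d \<le> c' \<or> d' \<le> c)"
  then have "max c c' < min d d'"
    using assms(1,2) by auto
  then obtain z where "max c c' < z" "z < min d d'"
    using dense by blast
  then show False
    using assms(3) by auto
qed

lemma sum_lengths_eq_measure_Union_Icc:
  fixes F :: "(real \<times> real) set"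
  assumes "finite F" and "\<And>c d. (c, d) \<in> F \<Longrightarrow> c \<le> d"
    and apart: "\<And>c d c' d'. (c, d) \<in> F \<Longrightarrow> (c', d') \<in> F \<Longrightarrow> (c, d) \<noteq> (c', d') \<Longrightarrow> d \<le> c' \<or> d' \<le> c"
  shows "(\<Sum>(c, d)\<in>F. d - c) = measure lebesgue (\<Union>(c, d)\<in>F. {c..d})"
proof -
  have "negligible ({fst p..snd p} \<inter> {fst q..snd q})" if "p \<in> F" "q \<in> F" "p \<noteq> q" for p q
  proof -
    have "{fst p..snd p} \<inter> {fst q..snd q} \<subseteq> {snd p, snd q}"
      using apart[of "fst p" "snd p" "fst q" "snd q"] that by auto
    then show ?thesis
      by (rule negligible_subset[OF negligible_finite, rotated]) simp
  qed
  then have "measure lebesgue (\<Union>p\<in>F. {fst p..snd p}) = (\<Sum>p\<in>F. measure lebesgue {fst p..snd p})"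
    using assms(1) by (intro measure_negligible_finite_Union_image) (auto simp: pairwise_def)
  then have "measure lebesgue (\<Union>(c, d)\<in>F. {c..d}) = (\<Sum>(c, d)\<in>F. measure lebesgue {c..d})"
    by (simp add: case_prod_beta)
  also have "\<dots> = (\<Sum>(c, d)\<in>F. d - c)"
    using assms(2) by (intro sum.cong refl) auto
  finally show ?thesis ..
qed

lemma negligible_outer_Icc_family:
  fixes Z :: "real set"
  assumes Z: "negligible Z" "Z \<subseteq> {a..b}" and "a < b" "\<delta> > 0"
  obtains \<D> where "countable \<D>" "\<And>K. K \<in> \<D> \<Longrightarrow> K = {Inf K..Sup K} \<and> a \<le> Inf K \<and> Inf K < Sup K \<and> Sup K \<le> b"
    "pairwise (\<lambda>A B. interior A \<inter> interior B = {}) \<D>"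
    "Z \<subseteq> \<Union>\<D>" "\<Union>\<D> \<in> lmeasurable" "measure lebesgue (\<Union>\<D>) < \<delta>"
proof -
  have Z_meas: "Z \<in> lmeasurable" "measure lebesgue Z = 0"
    using Z(1) negligible_imp_measurable negligible_imp_measure0 by blast+
  obtain \<D> where \<D>: "countable \<D>"
      "\<And>K. K \<in> \<D> \<Longrightarrow> K \<subseteq> cbox a b \<and> K \<noteq> {} \<and> (\<exists>c d. K = cbox c d)"
      "pairwise (\<lambda>A B. interior A \<inter> interior B = {}) \<D>"
      "\<And>K. K \<in> \<D> \<Longrightarrow> box a b \<noteq> {} \<Longrightarrow> interior K \<noteq> {}"
      "Z \<subseteq> \<Union>\<D>" "\<Union>\<D> \<in> lmeasurable" "measure lebesgue (\<Union>\<D>) \<le> measure lebesgue Z + \<delta> / 2"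
  proof (rule measurable_outer_intervals_bounded[OF Z_meas(1)])
    show "Z \<subseteq> cbox a b" "\<delta> / 2 > 0" using Z(2) \<open>\<delta> > 0\<close> by auto
  qed blast
  have "K = {Inf K..Sup K} \<and> a \<le> Inf K \<and> Inf K < Sup K \<and> Sup K \<le> b" if KD: "K \<in> \<D>" for K
  proof -
    obtain c d where K: "K = {c..d}"
      using \<D>(2)[OF KD] by auto
    moreover have "c < d"
      using \<D>(4)[OF KD] \<open>a < b\<close> K by auto
    moreover have "a \<le> c" "d \<le> b"
      using \<D>(2)[OF KD] K \<open>c < d\<close> by auto
    ultimately show ?thesis by simp
  qed
  then show ?thesis
    using that \<D>(1,3,5,6,7) Z_meas(2) \<open>\<delta> > 0\<close> by simp
qed

lemma negligible_nonoverlapping_interval_cover: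
  fixes Z :: "real set"
  assumes Z: "negligible Z" "Z \<subseteq> {a..b}" and "a < b" "\<delta> > 0"
  obtains D where "countable D" "\<And>c d. (c, d) \<in> D \<Longrightarrow> a \<le> c \<and> c < d \<and> d \<le> b"
    "\<And>c d c' d'. (c, d) \<in> D \<Longrightarrow> (c', d') \<in> D \<Longrightarrow> (c, d) \<noteq> (c', d') \<Longrightarrow> d \<le> c' \<or> d' \<le> c"
    "Z \<subseteq> (\<Union>(c, d)\<in>D. {c..d})"
    "\<And>F. finite F \<Longrightarrow> F \<subseteq> D \<Longrightarrow> (\<Sum>(c, d)\<in>F. d - c) < \<delta>"
proof -
  obtain \<D> where \<D>: "countable \<D>" "\<And>K. K \<in> \<D> \<Longrightarrow> K = {Inf K..Sup K} \<and> a \<le> Inf K \<and> Inf K < Sup K \<and> Sup K \<le> b"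
      "pairwise (\<lambda>A B. interior A \<inter> interior B = {}) \<D>"
      "Z \<subseteq> \<Union>\<D>" "\<Union>\<D> \<in> lmeasurable" "measure lebesgue (\<Union>\<D>) < \<delta>"
    using negligible_outer_Icc_family[OF assms] by blast
  define D where "D = (\<lambda>K. (Inf K, Sup K)) ` \<D>"
  have D_Icc: "{c..d} \<in> \<D> \<and> a \<le> c \<and> c < d \<and> d \<le> b" if "(c, d) \<in> D" for c d
    using that \<D>(2) by (auto simp: D_def)
  have apart: "d \<le> c' \<or> d' \<le> c"
    if cd: "(c, d) \<in> D" and cd': "(c', d') \<in> D" and ne: "(c, d) \<noteq> (c', d')" for c d c' d'
  proof (rule Ioo_disjoint_imp_apart)
    show "c < d" "c' < d'"
      using D_Icc[OF cd] D_Icc[OF cd'] by auto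
    then have "{c..d} \<noteq> {c'..d'}"
      using ne by auto
    then have "interior {c..d} \<inter> interior {c'..d'} = {}"
      using \<D>(3) D_Icc[OF cd] D_Icc[OF cd'] unfolding pairwise_def by blast
    then show "{c<..<d} \<inter> {c'<..<d'} = {}"
      by simp
  qed
  show ?thesis
  proof
    show "countable D" using \<D>(1) by (simp add: D_def)
    show "Z \<subseteq> (\<Union>(c, d)\<in>D. {c..d})"
      using \<D>(2,4) unfolding D_def by fastforce
    show "(\<Sum>(c, d)\<in>F. d - c) < \<delta>" if F: "finite F" "F \<subseteq> D" for F
    proof -
      have "(\<Sum>(c, d)\<in>F. d - c) = measure lebesgue (\<Union>(c, d)\<in>F. {c..d})"
      proof (rule sum_lengths_eq_measure_Union_Icc[OF F(1)])
        show "c \<le> d" if "(c, d) \<in> F" for c d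
          using D_Icc[of c d] that F(2) by auto
      qed (use F(2) apart in blast)
      also have "\<dots> \<le> measure lebesgue (\<Union>\<D>)"
        using F D_Icc \<D>(5) by (intro measure_mono_fmeasurable) (auto intro!: sets.finite_Union)
      finally show ?thesis
        using \<D>(6) by simp
    qed
  qed (use D_Icc apart in blast)+
qed

lemma emeasure_UN_le_if_finite_subfamilies:
  assumes "countable D" "\<And>i. i \<in> D \<Longrightarrow> A i \<in> sets M"
    and bound: "\<And>F. finite F \<Longrightarrow> F \<subseteq> D \<Longrightarrow> emeasure M (\<Union>i\<in>F. A i) \<le> c"
  shows "emeasure M (\<Union>i\<in>D. A i) \<le> c"
proof (cases "D = {}")
  case True
  then show ?thesis using bound[of "{}"] by simp
next
  case False
  define g where "g = from_nat_into D"
  have D: "D = range g"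
    using False assms(1) by (simp add: g_def)
  define P where "P n = (\<Union>i<n. A (g i))" for n
  have "(\<Union>i\<in>D. A i) = (\<Union>n. P n)"
    by (auto simp: P_def D)
  moreover have "(SUP n. emeasure M (P n)) = emeasure M (\<Union>n. P n)"
  proof (rule SUP_emeasure_incseq)
    show "incseq P"
      unfolding incseq_def P_def by (intro allI impI UN_mono) auto
  qed (use assms(2) in \<open>auto simp: P_def D\<close>)
  moreover have "emeasure M (P n) \<le> c" for n
    using bound[of "g ` {..<n}"] by (simp add: P_def D image_subset_iff)
  ultimately show ?thesis
    by (metis SUP_least)
qed

lemma emeasure_UN_Icc_le_sum:
  fixes l r :: "'i \<Rightarrow> real"
  assumes "finite F" "\<And>i. i \<in> F \<Longrightarrow> l i \<le> r i"
  shows "emeasure lebesgue (\<Union>i\<in>F. {l i..r i}) \<le> ennreal (\<Sum>i\<in>F. r i - l i)"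
proof -
  have "emeasure lebesgue (\<Union>i\<in>F. {l i..r i}) \<le> (\<Sum>i\<in>F. emeasure lebesgue {l i..r i})"
    using assms(1) by (intro emeasure_subadditive_finite) auto
  also have "\<dots> = ennreal (\<Sum>i\<in>F. r i - l i)"
    using assms(2) by (simp add: sum_ennreal)
  finally show ?thesis .
qed

lemma emeasure_UN_mono_image_Icc_le:
  fixes f :: "real \<Rightarrow> real"
  assumes mono: "mono_on S f" and F: "finite F" "\<And>c d. (c, d) \<in> F \<Longrightarrow> c \<le> d \<and> {c..d} \<subseteq> S"
  shows "emeasure lebesgue (\<Union>(c, d)\<in>F. {f c..f d}) \<le> ennreal (\<Sum>(c, d)\<in>F. \<bar>f d - f c\<bar>)"
proof -
  have le: "f (fst p) \<le> f (snd p)" if "p \<in> F" for p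
    using F(2)[of "fst p" "snd p"] that by (auto intro!: mono_onD[OF mono])
  then have "(\<Sum>(c, d)\<in>F. \<bar>f d - f c\<bar>) = (\<Sum>(c, d)\<in>F. f d - f c)"
    by (intro sum.cong) (auto simp: case_prod_beta)
  then show ?thesis
    using emeasure_UN_Icc_le_sum[OF F(1), of "\<lambda>(c, d). f c" "\<lambda>(c, d). f d"] le
    by (simp add: case_prod_beta)
qed

lemma lmeasurable_if_emeasure_le:
  assumes "T \<in> sets lebesgue" "emeasure lebesgue T \<le> ennreal c" "c \<ge> 0"
  shows "T \<in> lmeasurable" "measure lebesgue T \<le> c"
proof -
  show "T \<in> lmeasurable"
    using assms(1) order.strict_trans1[OF assms(2) ennreal_less_top] by (intro fmeasurableI) auto
  then show "measure lebesgue T \<le> c"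
    using assms(2,3) by (simp add: emeasure_eq_measure2)
qed

lemma abs_cont_mono_image_small_cover:
  fixes f :: "real \<Rightarrow> real"
  assumes ac: "abs_cont_on {a..b} f" and mono: "mono_on {a..b} f" and Z: "negligible Z" "Z \<subseteq> {a..b}"
    and "a < b" "\<epsilon> > 0"
  obtains T where "f ` Z \<subseteq> T" "T \<in> sets lebesgue" "emeasure lebesgue T \<le> ennreal \<epsilon>"
proof -
  obtain \<delta> where "\<delta> > 0" and \<delta>: "\<And>F. finite F \<Longrightarrow> (\<And>c d. (c, d) \<in> F \<Longrightarrow> c \<le> d \<and> {c..d} \<subseteq> {a..b}) \<Longrightarrow>
     (\<And>c d c' d'. (c, d) \<in> F \<Longrightarrow> (c', d') \<in> F \<Longrightarrow> (c, d) \<noteq> (c', d') \<Longrightarrow> d \<le> c' \<or> d' \<le> c) \<Longrightarrow>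
     (\<Sum>(c, d)\<in>F. d - c) < \<delta> \<Longrightarrow> (\<Sum>(c, d)\<in>F. \<bar>f d - f c\<bar>) < \<epsilon>"
    using abs_cont_onE_finite[OF ac \<open>\<epsilon> > 0\<close>] by blast
  obtain D where D: "countable D" "\<And>c d. (c, d) \<in> D \<Longrightarrow> a \<le> c \<and> c < d \<and> d \<le> b"
      "\<And>c d c' d'. (c, d) \<in> D \<Longrightarrow> (c', d') \<in> D \<Longrightarrow> (c, d) \<noteq> (c', d') \<Longrightarrow> d \<le> c' \<or> d' \<le> c"
      "Z \<subseteq> (\<Union>(c, d)\<in>D. {c..d})"
      "\<And>F. finite F \<Longrightarrow> F \<subseteq> D \<Longrightarrow> (\<Sum>(c, d)\<in>F. d - c) < \<delta>"
    using negligible_nonoverlapping_interval_cover[OF Z \<open>a < b\<close> \<open>\<delta> > 0\<close>] by blast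
  show ?thesis
  proof
    show "f ` Z \<subseteq> (\<Union>(c, d)\<in>D. {f c..f d})"
    proof
      fix y assume "y \<in> f ` Z"
      then obtain z c d where "y = f z" "(c, d) \<in> D" "z \<in> {c..d}"
        using D(4) by fastforce
      then show "y \<in> (\<Union>(c, d)\<in>D. {f c..f d})"
        using D(2)[of c d] by (intro UN_I[of "(c, d)"]) (auto intro!: mono_onD[OF mono])
    qed
    show "(\<Union>(c, d)\<in>D. {f c..f d}) \<in> sets lebesgue"
      using D(1) by (intro sets.countable_UN'') (auto simp: case_prod_beta)
    show "emeasure lebesgue (\<Union>(c, d)\<in>D. {f c..f d}) \<le> ennreal \<epsilon>"
    proof (rule emeasure_UN_le_if_finite_subfamilies[OF D(1)])
      fix F assume F: "finite F" "F \<subseteq> D"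
      then have F_sub: "c \<le> d \<and> {c..d} \<subseteq> {a..b}" if "(c, d) \<in> F" for c d
        using D(2)[of c d] that by auto
      have "emeasure lebesgue (\<Union>(c, d)\<in>F. {f c..f d}) \<le> ennreal (\<Sum>(c, d)\<in>F. \<bar>f d - f c\<bar>)"
        by (rule emeasure_UN_mono_image_Icc_le[OF mono F(1) F_sub])
      also have "\<dots> \<le> ennreal \<epsilon>"
        using \<delta>[OF F(1) F_sub] F D(3,5) by (intro ennreal_leI less_imp_le) blast
      finally show "emeasure lebesgue (\<Union>(c, d)\<in>F. {f c..f d}) \<le> ennreal \<epsilon>" .
    qed auto
  qed
qed

lemma negligible_image_abs_cont_mono:
  fixes f :: "real \<Rightarrow> real"
  assumes ac: "abs_cont_on {a..b} f" and mono: "mono_on {a..b} f" and Z: "negligible Z" "Z \<subseteq> {a..b}"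
  shows "negligible (f ` Z)"
proof (cases "a < b")
  case False
  then have "Z \<subseteq> {a}"
    using Z(2) by auto
  then have "f ` Z \<subseteq> {f a}"
    by auto
  then show ?thesis
    using negligible_subset negligible_sing by metis
next
  case True
  show ?thesis
    unfolding negligible_outer_le
  proof (intro allI impI)
    fix \<epsilon> :: real assume "\<epsilon> > 0"
    then obtain T where "f ` Z \<subseteq> T" "T \<in> sets lebesgue" "emeasure lebesgue T \<le> ennreal \<epsilon>"
      using abs_cont_mono_image_small_cover[OF ac mono Z True] by blast
    then show "\<exists>T. f ` Z \<subseteq> T \<and> T \<in> lmeasurable \<and> measure lebesgue T \<le> \<epsilon>"
      using lmeasurable_if_emeasure_le[OF _ _ less_imp_le[OF \<open>\<epsilon> > 0\<close>]] by blast
  qed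
qed

lemma continuous_mono_on_image_Icc:
  fixes f :: "real \<Rightarrow> real"
  assumes "continuous_on {x..y} f" "mono_on {x..y} f" "x \<le> y"
  shows "f ` {x..y} = {f x..f y}"
proof
  show "f ` {x..y} \<subseteq> {f x..f y}"
    using assms(3) by (auto intro!: mono_onD[OF assms(2)])
  show "{f x..f y} \<subseteq> f ` {x..y}"
  proof
    fix v assume "v \<in> {f x..f y}"
    then obtain z where "x \<le> z" "z \<le> y" "f z = v"
      using IVT'[of f x v y] assms by auto
    then show "v \<in> f ` {x..y}" by auto
  qed
qed

lemma measure_image_derivative_indicator:
  fixes f :: "real \<Rightarrow> real"
  assumes S: "S \<in> sets lebesgue" and inj: "inj_on f S" and bdd: "bounded (f ` S)"
    and der: "\<And>z. z \<in> S \<Longrightarrow> (f has_real_derivative indicator D z) (at z within S)"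
  shows "f ` S \<in> lmeasurable" "D \<inter> S \<in> lmeasurable" "measure lebesgue (D \<inter> S) = measure lebesgue (f ` S)"
proof -
  have "f differentiable_on S"
    using der by (auto simp: differentiable_on_def has_field_derivative_def intro: differentiableI)
  then have "f ` S \<in> sets lebesgue"
    by (intro differentiable_image_in_sets_lebesgue[OF S]) simp_all
  then show fS: "f ` S \<in> lmeasurable"
    using bdd by (rule bounded_set_imp_lmeasurable[rotated])
  then have "(\<lambda>_. 1::real) absolutely_integrable_on f ` S \<and> integral (f ` S) (\<lambda>_. 1) = measure lebesgue (f ` S)"
    by (simp add: absolutely_integrable_on_iff_nonneg lmeasurable_iff_integrable_on lmeasure_integral)
  then have "(indicator D :: real \<Rightarrow> real) absolutely_integrable_on S \<and>
      integral S (indicator D) = measure lebesgue (f ` S)"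
    using has_absolute_integral_change_of_variables_1'[OF S der inj, of "\<lambda>_. 1"] by simp
  then have int: "(\<lambda>z. if z \<in> D then 1 else 0 :: real) integrable_on S"
    and eq: "integral S (\<lambda>z. if z \<in> D then 1 else 0 :: real) = measure lebesgue (f ` S)"
    unfolding absolutely_integrable_on_def indicator_def of_bool_def by auto
  show "D \<inter> S \<in> lmeasurable"
    using int by (simp add: integrable_restrict_Int lmeasurable_iff_integrable_on Int_commute)
  then have "measure lebesgue (D \<inter> S) = integral S (\<lambda>z. if z \<in> D then 1 else 0 :: real)"
    by (simp add: lmeasure_integral integral_restrict_Int Int_commute)
  then show "measure lebesgue (D \<inter> S) = measure lebesgue (f ` S)"
    using eq by simp
qed

lemma lmeasurable_Un_negligible:
  assumes "A \<in> lmeasurable" "negligible N"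
  shows "A \<union> N \<in> lmeasurable" "measure lebesgue (A \<union> N) = measure lebesgue A"
  using assms fmeasurable.Un[OF assms(1) negligible_imp_measurable[OF assms(2)]]
    measure_Un_null_set[of A lebesgue N]
  by (auto simp: negligible_iff_null_sets fmeasurableD)

lemma measure_image_derivative_indicator_off_null:
  fixes f :: "real \<Rightarrow> real"
  assumes J: "J \<in> sets lebesgue" and N: "negligible N" "negligible (f ` (J \<inter> N))"
    and inj: "inj_on f J" and bdd: "bounded (f ` J)"
    and der: "\<And>z. z \<in> J - N \<Longrightarrow> (f has_real_derivative indicator D z) (at z within J - N)"
  shows "D \<inter> J \<in> lmeasurable" "measure lebesgue (D \<inter> J) = measure lebesgue (f ` J)"
proof -
  have "J - N \<in> sets lebesgue"
    using J negligible_imp_measurable[OF N(1)] by auto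
  moreover have "inj_on f (J - N)" "bounded (f ` (J - N))"
    using inj bdd by (auto intro: inj_on_subset bounded_subset)
  ultimately have JN: "f ` (J - N) \<in> lmeasurable" "D \<inter> (J - N) \<in> lmeasurable"
      "measure lebesgue (D \<inter> (J - N)) = measure lebesgue (f ` (J - N))"
    using measure_image_derivative_indicator[OF _ _ _ der] by blast+
  have null: "negligible (D \<inter> (J \<inter> N))"
    by (rule negligible_subset[OF N(1)]) blast
  have D_split: "D \<inter> J = D \<inter> (J - N) \<union> D \<inter> (J \<inter> N)" and f_split: "f ` J = f ` (J - N) \<union> f ` (J \<inter> N)"
    by auto
  show "D \<inter> J \<in> lmeasurable"
    unfolding D_split by (rule lmeasurable_Un_negligible(1)[OF JN(2) null])
  show "measure lebesgue (D \<inter> J) = measure lebesgue (f ` J)"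
    unfolding D_split f_split
    using lmeasurable_Un_negligible(2)[OF JN(2) null] lmeasurable_Un_negligible(2)[OF JN(1) N(2)] JN(3)
    by simp
qed

lemma abs_cont_increment_eq_measure:
  fixes f :: "real \<Rightarrow> real"
  assumes xy: "x \<le> y" "{x..y} \<subseteq> I" and ac: "abs_cont_on {x..y} f" and mono: "strict_mono_on I f"
    and N: "negligible N"
    and der01: "\<And>z. z \<in> I - N \<Longrightarrow>
      (f has_real_derivative 0) (at z within I) \<or> (f has_real_derivative 1) (at z within I)"
  defines "D \<equiv> {z \<in> I. (f has_real_derivative 1) (at z within I)}"
  shows "D \<inter> {x..y} \<in> lmeasurable \<and> f y - f x = measure lebesgue (D \<inter> {x..y})"
proof -
  have mono_xy: "mono_on {x..y} f"
    using strict_mono_on_imp_mono_on[OF mono] xy(2) mono_on_subset by blast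
  have image: "f ` {x..y} = {f x..f y}"
    using abs_cont_on_imp_continuous_on[OF ac] mono_xy xy(1) by (rule continuous_mono_on_image_Icc)
  have null: "negligible (f ` ({x..y} \<inter> N))"
    using negligible_image_abs_cont_mono[OF ac mono_xy negligible_subset[OF N Int_lower2] Int_lower1] .
  have inj: "inj_on f {x..y}"
    using strict_mono_on_imp_inj_on[OF mono] xy(2) inj_on_subset by blast
  have der: "(f has_real_derivative indicator D z) (at z within {x..y} - N)" if "z \<in> {x..y} - N" for z
  proof -
    have "(f has_real_derivative indicator D z) (at z within I)"
      using der01[of z] that xy(2) unfolding D_def by (auto simp: indicator_def)
    then show ?thesis
      by (rule has_field_derivative_subset) (use xy(2) in auto)
  qed
  have "bounded (f ` {x..y})"
    unfolding image by simp
  then have "D \<inter> {x..y} \<in> lmeasurable" "measure lebesgue (D \<inter> {x..y}) = measure lebesgue {f x..f y}"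
    using measure_image_derivative_indicator_off_null[OF _ N null inj _ der] image by auto
  then show ?thesis
    using mono_onD[OF mono_xy, of x y] xy(1) by simp
qed

section \<open>The interval I and the gaps of E\<close>

lemma E_subset_intI: "E \<subseteq> intI E"
proof
  fix x assume "x \<in> E"
  moreover have "lend E \<le> ereal x" "ereal x \<le> rend E"
    using calculation by (auto simp: lend_def rend_def intro: Inf_lower Sup_upper)
  ultimately show "x \<in> intI E"
    by (auto simp: intI_def order.order_iff_strict)
qed

lemma is_interval_intI: "is_interval (intI E)"
  unfolding is_interval_1
proof (intro ballI allI impI)
  fix x y z assume x: "x \<in> intI E" and y: "y \<in> intI E" and "x \<le> z \<and> z \<le> y"
  then have "x \<le> z" "z \<le> y" by auto
  consider "z = x" | "z = y" | "x < z" "z < y"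
    using \<open>x \<le> z\<close> \<open>z \<le> y\<close> by fastforce
  then show "z \<in> intI E"
  proof cases
    case 3
    have "lend E \<le> ereal x" "ereal y \<le> rend E"
      using x y E_subset_intI by (auto simp: intI_def lend_def rend_def intro: Inf_lower Sup_upper)
    moreover have "ereal x < ereal z" "ereal z < ereal y"
      using 3 by simp_all
    ultimately have "lend E < ereal z" "ereal z < rend E"
      by (meson order.strict_trans1, meson order.strict_trans2)
    then show ?thesis
      by (simp add: intI_def)
  qed (use x y in auto)
qed

lemma Ioo_subset_intI:
  assumes "x \<in> intI E" "y \<in> intI E"
  shows "{x<..<y} \<subseteq> intI E"
proof
  fix z assume "z \<in> {x<..<y}"
  then have "x \<le> z" "z \<le> y" by auto
  then show "z \<in> intI E"
    using is_interval_intI[of E, unfolded is_interval_1] assms by blast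
qed

lemma Icc_subset_intI:
  assumes "x \<in> intI E" "y \<in> intI E"
  shows "{x..y} \<subseteq> intI E"
proof
  fix z assume "z \<in> {x..y}"
  then have "x \<le> z" "z \<le> y" by auto
  then show "z \<in> intI E"
    using is_interval_intI[of E, unfolded is_interval_1] assms by blast
qed

lemma closed_classK_real_points:
  assumes "classK E"
  shows "closed (ereal -` (ereal ` E \<union> {lend E, rend E}))"
  using assms continuous_on_ereal[OF continuous_on_id] unfolding classK_def
  by (intro closed_vimage) auto

lemma open_intI_minus_E:
  assumes "classK E"
  shows "open (intI E - E)"
proof -
  have "intI E - E = ereal -` {lend E<..<rend E} - ereal -` (ereal ` E \<union> {lend E, rend E})"
    by (auto simp: intI_def)
  then show ?thesis
    using closed_classK_real_points[OF assms] continuous_on_ereal[OF continuous_on_id]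
    by (metis open_Diff open_greaterThanLessThan open_vimage)
qed

lemma gap_point_bounds:
  assumes "classK E" "x \<in> intI E - E"
  shows "x \<notin> ereal -` (ereal ` E \<union> {lend E, rend E})" "lend E < ereal x" "ereal x < rend E"
  using assms by (auto simp: intI_def)

lemma Sup_below_gap_point:
  assumes K: "classK E" and x: "x \<in> intI E - E"
  shows "Sup {y \<in> E. y < x} \<in> E" "Sup {y \<in> E. y < x} < x"
proof -
  define C L where "C = ereal -` (ereal ` E \<union> {lend E, rend E})" and "L = {y \<in> E. y < x}"
  note x_facts = gap_point_bounds[OF K x, folded C_def]
  obtain y0 where y0: "y0 \<in> L"
    using x_facts(2) by (auto simp: lend_def Inf_less_iff L_def)
  have "bdd_above L"
    unfolding L_def bdd_above_def by (auto intro!: exI[of _ x])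
  have "closure L \<subseteq> C"
    using closed_classK_real_points[OF K] by (intro closure_minimal) (auto simp: L_def C_def)
  then have "Sup L \<in> C"
    using closure_contains_Sup[of L] y0 \<open>bdd_above L\<close> by auto
  moreover have "y0 \<le> Sup L" "Sup L \<le> x"
    using y0 \<open>bdd_above L\<close> by (auto simp: L_def intro: cSup_upper cSup_least)
  ultimately show "Sup L < x"
    using x_facts(1) by (auto simp: order.order_iff_strict)
  then have "ereal (Sup L) \<noteq> rend E"
    using x_facts(3) less_trans[of "ereal (Sup L)" "ereal x" "rend E"] by auto
  moreover have "ereal (Sup L) \<noteq> lend E \<or> Sup L = y0"
  proof -
    have "lend E \<le> ereal y0"
      using y0 by (auto simp: L_def lend_def intro: Inf_lower)
    then show ?thesis
      using \<open>y0 \<le> Sup L\<close> by (metis ereal_less_eq(3) order.antisym)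
  qed
  ultimately show "Sup L \<in> E"
    using \<open>Sup L \<in> C\<close> y0 by (auto simp: C_def L_def)
qed

lemma Inf_above_gap_point:
  assumes K: "classK E" and x: "x \<in> intI E - E"
  shows "Inf {y \<in> E. x < y} \<in> E" "x < Inf {y \<in> E. x < y}"
proof -
  define C R where "C = ereal -` (ereal ` E \<union> {lend E, rend E})" and "R = {y \<in> E. x < y}"
  note x_facts = gap_point_bounds[OF K x, folded C_def]
  obtain y1 where y1: "y1 \<in> R"
    using x_facts(3) by (auto simp: rend_def less_Sup_iff R_def)
  have "bdd_below R"
    unfolding R_def bdd_below_def by (auto intro!: exI[of _ x])
  have "closure R \<subseteq> C"
    using closed_classK_real_points[OF K] by (intro closure_minimal) (auto simp: R_def C_def)
  then have "Inf R \<in> C"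
    using closure_contains_Inf[of R] y1 \<open>bdd_below R\<close> by auto
  moreover have "Inf R \<le> y1" "x \<le> Inf R"
    using y1 \<open>bdd_below R\<close> by (auto simp: R_def intro: cInf_lower cInf_greatest)
  ultimately show "x < Inf R"
    using x_facts(1) by (auto simp: order.order_iff_strict)
  then have "ereal (Inf R) \<noteq> lend E"
    using x_facts(2) less_trans[of "lend E" "ereal x" "ereal (Inf R)"] by auto
  moreover have "ereal (Inf R) \<noteq> rend E \<or> Inf R = y1"
  proof -
    have "ereal y1 \<le> rend E"
      using y1 by (auto simp: R_def rend_def intro: Sup_upper)
    then show ?thesis
      using \<open>Inf R \<le> y1\<close> by (metis ereal_less_eq(3) order.antisym)
  qed
  ultimately show "Inf R \<in> E"
    using \<open>Inf R \<in> C\<close> y1 by (auto simp: C_def R_def)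
qed

lemma gap_endpoints:
  assumes K: "classK E" and x: "x \<in> intI E - E"
  defines "a \<equiv> Sup {y \<in> E. y < x}" and "b \<equiv> Inf {y \<in> E. x < y}"
  shows "a \<in> E" "b \<in> E" "a < x" "x < b" "{a<..<b} \<subseteq> intI E - E"
proof -
  show "a \<in> E" "b \<in> E" "a < x" "x < b"
    using Sup_below_gap_point[OF K x] Inf_above_gap_point[OF K x] by (simp_all add: a_def b_def)
  have "y \<notin> E" if "a < y" "y < b" for y
  proof
    assume "y \<in> E"
    have "bdd_above {y \<in> E. y < x}" "bdd_below {y \<in> E. x < y}"
      unfolding bdd_above_def bdd_below_def by (auto intro!: exI[of _ x])
    moreover have "y \<noteq> x"
      using x \<open>y \<in> E\<close> by auto
    ultimately have "y \<le> a \<or> b \<le> y"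
      using \<open>y \<in> E\<close> unfolding a_def b_def by (cases "y < x") (auto intro: cSup_upper cInf_lower)
    then show False
      using that by simp
  qed
  moreover have "{a<..<b} \<subseteq> intI E"
    using Ioo_subset_intI \<open>a \<in> E\<close> \<open>b \<in> E\<close> E_subset_intI by blast
  ultimately show "{a<..<b} \<subseteq> intI E - E"
    by auto
qed

section \<open>Scale functions and their densities\<close>

lemma lipschitz_imp_abs_cont_on:
  fixes f :: "real \<Rightarrow> real"
  assumes lip: "\<And>x y. x \<in> S \<Longrightarrow> y \<in> S \<Longrightarrow> x \<le> y \<Longrightarrow> \<bar>f y - f x\<bar> \<le> y - x"
  shows "abs_cont_on S f"
  unfolding abs_cont_on_def
proof (intro allI impI exI[of _ "\<epsilon>" for \<epsilon>] conjI)
  fix \<epsilon> :: real and n :: nat and l r :: "nat \<Rightarrow> real"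
  assume "(\<forall>i<n. l i \<le> r i \<and> {l i..r i} \<subseteq> S) \<and> (\<forall>i<n. \<forall>j<n. i \<noteq> j \<longrightarrow> r i \<le> l j \<or> r j \<le> l i) \<and>
    (\<Sum>i<n. r i - l i) < \<epsilon>"
  then have "(\<Sum>i<n. \<bar>f (r i) - f (l i)\<bar>) \<le> (\<Sum>i<n. r i - l i)" "(\<Sum>i<n. r i - l i) < \<epsilon>"
    by (auto intro!: sum_mono lip simp: subset_iff)
  then show "(\<Sum>i<n. \<bar>f (r i) - f (l i)\<bar>) < \<epsilon>"
    by linarith
qed

lemma indicator_primitive_affine:
  fixes G :: "real set"
  assumes "G \<in> sets lebesgue" "a \<le> b" "{a<..<b} \<subseteq> G"
  shows "indicator_primitive G e b = indicator_primitive G e a + (b - a)"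
proof -
  have "G \<inter> {a<..<b} = {a<..<b}"
    using assms(3) by blast
  then show ?thesis
    using indicator_primitive_diff[OF assms(1,2), of e] assms(2) by simp
qed

lemma sets_lebesgue_if_Int_Icc:
  fixes S I :: "real set"
  assumes I: "is_interval I" and "S \<subseteq> I"
    and pieces: "\<And>x y. x \<in> I \<Longrightarrow> y \<in> I \<Longrightarrow> x \<le> y \<Longrightarrow> S \<inter> {x..y} \<in> sets lebesgue"
  shows "S \<in> sets lebesgue"
proof -
  define Q where "Q = {(x, y). x \<in> I \<and> y \<in> I \<and> x \<le> y \<and> x \<in> \<rat> \<and> y \<in> \<rat>}"
  define T where "T = (\<Union>(x, y)\<in>Q. S \<inter> {x..y})"
  have "countable Q"
    by (rule countable_subset[of _ "\<rat> \<times> \<rat>"]) (auto simp: Q_def countable_rat)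
  then have "T \<in> sets lebesgue"
    unfolding T_def using pieces by (intro sets.countable_UN'') (auto simp: Q_def)
  moreover have "S - T \<subseteq> I - interior I"
  proof
    fix z assume z: "z \<in> S - T"
    show "z \<in> I - interior I"
    proof (rule ccontr)
      assume "z \<notin> I - interior I"
      then obtain \<rho> where "\<rho> > 0" "ball z \<rho> \<subseteq> I"
        using z \<open>S \<subseteq> I\<close> mem_interior by blast
      moreover obtain q1 q2 where "q1 \<in> \<rat>" "z - \<rho> < q1" "q1 < z" "q2 \<in> \<rat>" "z < q2" "q2 < z + \<rho>"
        using Rats_dense_in_real[of "z - \<rho>" z] Rats_dense_in_real[of z "z + \<rho>"] \<open>\<rho> > 0\<close> by auto
      moreover have "q1 \<in> ball z \<rho>" "q2 \<in> ball z \<rho>"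
        using \<open>z - \<rho> < q1\<close> \<open>q1 < z\<close> \<open>z < q2\<close> \<open>q2 < z + \<rho>\<close> by (auto simp: dist_real_def)
      ultimately have "(q1, q2) \<in> Q" "z \<in> S \<inter> {q1..q2}"
        using z unfolding Q_def by auto
      then show False
        using z by (auto simp: T_def)
    qed
  qed
  then have "S - T \<in> sets lebesgue"
    using negligible_subset[OF negligible_interval_minus_interior[OF I]] negligible_imp_measurable by blast
  moreover have "S = T \<union> (S - T)"
    by (auto simp: T_def)
  ultimately show ?thesis
    by (metis sets.Un)
qed

lemma indicator_primitive_has_derivative_one:
  fixes G U :: "real set"
  assumes G: "G \<in> sets lebesgue" and U: "open U" "U \<subseteq> G" "x \<in> U"
  shows "(indicator_primitive G e has_real_derivative 1) (at x)"
proof -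
  obtain \<rho> where "\<rho> > 0" and ball: "ball x \<rho> \<subseteq> U"
    using U openE by blast
  have affine: "indicator_primitive G e x + (y - x) = indicator_primitive G e y" if "y \<in> ball x \<rho>" for y
  proof -
    have "{min x y<..<max x y} \<subseteq> ball x \<rho>"
      using that by (auto simp: dist_real_def)
    then have "indicator_primitive G e (max x y) = indicator_primitive G e (min x y) + (max x y - min x y)"
      using ball U(2) by (intro indicator_primitive_affine[OF G]) auto
    then show ?thesis
      by (cases "x \<le> y") (simp_all add: min_def max_def)
  qed
  have "((\<lambda>y. indicator_primitive G e x + (y - x)) has_real_derivative 1) (at x)"
    by (auto intro!: derivative_eq_intros)
  then show ?thesis
    using \<open>\<rho> > 0\<close> affine
    by (elim has_field_derivative_transform_within_open[OF _ open_ball centre_in_ball[THEN iffD2]])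
qed

lemma loc_abs_cont_on_if_measure_increments:
  fixes f :: "real \<Rightarrow> real"
  assumes D: "D \<in> sets lebesgue"
    and inc: "\<And>a b. a \<in> I \<Longrightarrow> b \<in> I \<Longrightarrow> a \<le> b \<Longrightarrow> f b - f a = measure lebesgue (D \<inter> {a<..<b})"
  shows "loc_abs_cont_on I f"
  unfolding loc_abs_cont_on_def
proof (intro allI impI lipschitz_imp_abs_cont_on)
  fix a b x y assume "{a..b} \<subseteq> I" "x \<in> {a..b}" "y \<in> {a..b}" "x \<le> y"
  then have "f y - f x = measure lebesgue (D \<inter> {x<..<y})"
    by (intro inc) auto
  then show "\<bar>f y - f x\<bar> \<le> y - x"
    using measure_Int_Ioo_le[OF D \<open>x \<le> y\<close>] by simp
qed

lemma strict_mono_on_if_measure_increments: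
  fixes f :: "real \<Rightarrow> real"
  assumes I: "is_interval I" and D: "D \<in> sets lebesgue"
    and inc: "\<And>a b. a \<in> I \<Longrightarrow> b \<in> I \<Longrightarrow> a \<le> b \<Longrightarrow> f b - f a = measure lebesgue (D \<inter> {a<..<b})"
    and pos: "\<And>c d. c < d \<Longrightarrow> {c<..<d} \<subseteq> I \<Longrightarrow> emeasure lebesgue (D \<inter> {c<..<d}) > 0"
  shows "strict_mono_on I f"
proof (rule strict_mono_onI)
  fix x y assume xy: "x \<in> I" "y \<in> I" "x < y"
  have "{x<..<y} \<subseteq> I"
  proof
    fix z assume "z \<in> {x<..<y}"
    then have "x \<le> z" "z \<le> y" by auto
    then show "z \<in> I"
      using I xy(1,2) unfolding is_interval_1 by blast
  qed
  then have "measure lebesgue (D \<inter> {x<..<y}) > 0"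
    using pos[OF xy(3)] lmeasurable_Int_Ioo[OF D] by (simp add: emeasure_eq_measure2)
  then show "f x < f y"
    using inc[OF xy(1,2)] xy(3) by simp
qed

lemma eq_indicator_primitive_if_increments:
  fixes f :: "real \<Rightarrow> real"
  assumes D: "D \<in> sets lebesgue" and "e \<in> I" "x \<in> I"
    and inc: "\<And>a b. a \<in> I \<Longrightarrow> b \<in> I \<Longrightarrow> a \<le> b \<Longrightarrow> f b - f a = measure lebesgue (D \<inter> {a<..<b})"
  shows "f x = f e + indicator_primitive D e x"
proof (cases "e \<le> x")
  case True
  then show ?thesis
    using inc[of e x] assms(2,3) indicator_primitive_diff[OF D True, of e] by (simp add: indicator_primitive_self)
next
  case False
  then show ?thesis
    using inc[of x e] assms(2,3) indicator_primitive_diff[OF D, of x e e] by (simp add: indicator_primitive_self)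
qed

lemma emeasure_Int_Ioo_pos_if_strict_mono:
  fixes f :: "real \<Rightarrow> real"
  assumes mono: "strict_mono_on I f" and D: "D \<in> sets lebesgue"
    and inc: "\<And>a b. a \<in> I \<Longrightarrow> b \<in> I \<Longrightarrow> a \<le> b \<Longrightarrow> f b - f a = measure lebesgue (D \<inter> {a<..<b})"
    and "c < d" "{c<..<d} \<subseteq> I"
  shows "emeasure lebesgue (D \<inter> {c<..<d}) > 0"
proof -
  define c' d' where "c' = (2 * c + d) / 3" and "d' = (c + 2 * d) / 3"
  have "c < c'" "c' < d'" "d' < d"
    using \<open>c < d\<close> by (auto simp: c'_def d'_def)
  then have I: "c' \<in> I" "d' \<in> I"
    using \<open>{c<..<d} \<subseteq> I\<close> by auto
  have "0 < f d' - f c'"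
    using strict_mono_onD[OF mono I \<open>c' < d'\<close>] by simp
  also have "\<dots> = measure lebesgue (D \<inter> {c'<..<d'})"
    using inc[OF I] \<open>c' < d'\<close> by simp
  finally have "0 < emeasure lebesgue (D \<inter> {c'<..<d'})"
    using lmeasurable_Int_Ioo[OF D] by (simp add: emeasure_eq_measure2)
  also have "\<dots> \<le> emeasure lebesgue (D \<inter> {c<..<d})"
    using \<open>c < c'\<close> \<open>d' < d\<close> D by (intro emeasure_mono) auto
  finally show ?thesis .
qed

lemma indicator_primitive_in_Sbar:
  assumes K: "classK E" and Gb: "Gb \<in> Hbar E" and e: "e \<in> intI E"
    and rep: "\<And>x. x \<in> intI E \<Longrightarrow> sb x = sb e + indicator_primitive Gb e x"
  shows "sb \<in> Sbar E"
proof -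
  have Gb_meas: "Gb \<in> sets lebesgue" and gaps: "intI E - E \<subseteq> Gb"
    and pos: "\<And>c d. c < d \<Longrightarrow> {c<..<d} \<subseteq> intI E \<Longrightarrow> emeasure lebesgue (Gb \<inter> {c<..<d}) > 0"
    using Gb unfolding Hbar_def by blast+
  have inc: "sb b - sb a = measure lebesgue (Gb \<inter> {a<..<b})"
    if "a \<in> intI E" "b \<in> intI E" "a \<le> b" for a b
    using rep[OF that(1)] rep[OF that(2)] indicator_primitive_diff[OF Gb_meas that(3), of e] by simp
  have transfer: "(sb has_real_derivative D) (at x within intI E)"
    if "x \<in> intI E" and "(indicator_primitive Gb e has_real_derivative D) (at x)" for x D
  proof -
    have "((\<lambda>y. sb e + indicator_primitive Gb e y) has_real_derivative D) (at x within intI E)"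
      using DERIV_add[OF DERIV_const that(2), of "sb e"] by (simp add: has_field_derivative_at_within)
    then show ?thesis
      using that(1) rep by (elim has_field_derivative_transform_within[OF _ zero_less_one]) simp_all
  qed
  have "loc_abs_cont_on (intI E) sb"
    by (rule loc_abs_cont_on_if_measure_increments[OF Gb_meas inc])
  moreover have "strict_mono_on (intI E) sb"
    by (rule strict_mono_on_if_measure_increments[OF is_interval_intI Gb_meas inc pos])
  moreover have "AE x in lebesgue. x \<in> intI E \<longrightarrow>
      (sb has_real_derivative 0) (at x within intI E) \<or> (sb has_real_derivative 1) (at x within intI E)"
    using AE_has_real_derivative_indicator_primitive[OF Gb_meas, of e]
  proof eventually_elim
    case (elim x)
    show ?case
      using transfer[OF _ elim] by (cases "x \<in> Gb") auto
  qed
  moreover have "(sb has_real_derivative 1) (at x within intI E)" if "x \<in> intI E - E" for x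
    using that by (intro transfer indicator_primitive_has_derivative_one[OF Gb_meas open_intI_minus_E[OF K] gaps]) auto
  ultimately show ?thesis
    unfolding Sbar_def by blast
qed

lemma Sbar_imp_indicator_primitive:
  assumes sb: "sb \<in> Sbar E" and e: "e \<in> intI E"
  obtains Gb where "Gb \<in> Hbar E" "\<And>x. x \<in> intI E \<Longrightarrow> sb x = sb e + indicator_primitive Gb e x"
proof -
  have ac: "loc_abs_cont_on (intI E) sb" and mono: "strict_mono_on (intI E) sb"
    and der01: "AE x in lebesgue. x \<in> intI E \<longrightarrow>
        (sb has_real_derivative 0) (at x within intI E) \<or> (sb has_real_derivative 1) (at x within intI E)"
    and gaps: "\<And>x. x \<in> intI E - E \<Longrightarrow> (sb has_real_derivative 1) (at x within intI E)"
    using sb unfolding Sbar_def mem_Collect_eq by blast+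
  obtain N where N_der01: "\<And>z. z \<in> space lebesgue - N \<Longrightarrow> z \<in> intI E \<longrightarrow>
      (sb has_real_derivative 0) (at z within intI E) \<or> (sb has_real_derivative 1) (at z within intI E)"
    and N: "N \<in> null_sets lebesgue"
    using AE_E3[OF der01] by metis
  define D where "D = {z \<in> intI E. (sb has_real_derivative 1) (at z within intI E)}"
  have piece: "D \<inter> {x..y} \<in> lmeasurable \<and> sb y - sb x = measure lebesgue (D \<inter> {x..y})"
    if "x \<in> intI E" "y \<in> intI E" "x \<le> y" for x y
  proof (unfold D_def, rule abs_cont_increment_eq_measure[OF that(3) Icc_subset_intI[OF that(1,2)] _ mono])
    show "abs_cont_on {x..y} sb"
      using ac Icc_subset_intI[OF that(1,2)] by (simp add: loc_abs_cont_on_def)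
    show "negligible N"
      using N by (simp add: negligible_iff_null_sets)
    fix z assume "z \<in> intI E - N"
    then show "(sb has_real_derivative 0) (at z within intI E) \<or> (sb has_real_derivative 1) (at z within intI E)"
      using N_der01[of z] by simp
  qed
  have D_meas: "D \<in> sets lebesgue"
  proof (rule sets_lebesgue_if_Int_Icc[OF is_interval_intI])
    show "D \<subseteq> intI E"
      by (auto simp: D_def)
    show "D \<inter> {x..y} \<in> sets lebesgue" if "x \<in> intI E" "y \<in> intI E" "x \<le> y" for x y
      using piece[OF that] by (simp add: fmeasurableD)
  qed
  have inc: "sb y - sb x = measure lebesgue (D \<inter> {x<..<y})"
    if "x \<in> intI E" "y \<in> intI E" "x \<le> y" for x y
    using piece[OF that] measure_Int_Icc_eq_Ioo[OF D_meas] by simp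
  have "D \<in> Hbar E"
    using D_meas gaps emeasure_Int_Ioo_pos_if_strict_mono[OF mono D_meas inc] by (auto simp: Hbar_def D_def)
  moreover have "sb x = sb e + indicator_primitive D e x" if "x \<in> intI E" for x
    using eq_indicator_primitive_if_increments[OF D_meas e that inc] .
  ultimately show ?thesis
    by (rule that)
qed

lemma ae_eq_if_Hbar_primitives_eq:
  assumes "G1 \<in> Hbar E" "G2 \<in> Hbar E"
    and "\<And>x. x \<in> intI E \<Longrightarrow> indicator_primitive G1 e x = indicator_primitive G2 e x"
  shows "ae_eq G1 G2"
  using assms by (intro ae_eq_if_indicator_primitives_eq[OF is_interval_intI]) (auto simp: Hbar_def)

lemma Sbar_iff_indicator_primitive:
  assumes K: "classK E" and e: "e \<in> intI E"
  shows "sb \<in> Sbar E \<longleftrightarrow>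
    (\<exists>Gb \<in> Hbar E. (\<forall>x \<in> intI E. sb x = sb e + indicator_primitive Gb e x) \<and>
       (\<forall>Gb' \<in> Hbar E. (\<forall>x \<in> intI E. sb x = sb e + indicator_primitive Gb' e x) \<longrightarrow> ae_eq Gb' Gb))"
proof
  assume "sb \<in> Sbar E"
  then obtain Gb where Gb: "Gb \<in> Hbar E" "\<And>x. x \<in> intI E \<Longrightarrow> sb x = sb e + indicator_primitive Gb e x"
    using Sbar_imp_indicator_primitive[OF _ e] by blast
  moreover have "ae_eq Gb' Gb"
    if "Gb' \<in> Hbar E" "\<forall>x \<in> intI E. sb x = sb e + indicator_primitive Gb' e x" for Gb'
  proof (rule ae_eq_if_Hbar_primitives_eq[OF that(1) Gb(1)])
    fix x assume "x \<in> intI E"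
    then show "indicator_primitive Gb' e x = indicator_primitive Gb e x"
      using that(2) Gb(2)[of x] by simp
  qed
  ultimately show "\<exists>Gb \<in> Hbar E. (\<forall>x \<in> intI E. sb x = sb e + indicator_primitive Gb e x) \<and>
       (\<forall>Gb' \<in> Hbar E. (\<forall>x \<in> intI E. sb x = sb e + indicator_primitive Gb' e x) \<longrightarrow> ae_eq Gb' Gb)"
    by blast
next
  assume "\<exists>Gb \<in> Hbar E. (\<forall>x \<in> intI E. sb x = sb e + indicator_primitive Gb e x) \<and>
       (\<forall>Gb' \<in> Hbar E. (\<forall>x \<in> intI E. sb x = sb e + indicator_primitive Gb' e x) \<longrightarrow> ae_eq Gb' Gb)"
  then show "sb \<in> Sbar E"
    using indicator_primitive_in_Sbar[OF K _ e] by blast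
qed

lemma ae_eq_sym: "ae_eq A B \<Longrightarrow> ae_eq B A"
  by (simp add: ae_eq_def Un_commute)

lemma ae_eq_Int: "ae_eq A B \<Longrightarrow> ae_eq (A \<inter> C) (B \<inter> C)"
  unfolding ae_eq_def negligible_iff_null_sets[symmetric] by (erule negligible_subset) auto

lemma Hbar_Int_Un_gaps: "G \<in> Hbar E \<Longrightarrow> (G \<inter> E) \<union> (intI E - E) = G"
  by (auto simp: Hbar_def)

lemma indicator_primitive_on_gap:
  assumes K: "classK E" and G: "G \<in> sets lebesgue" "intI E - E \<subseteq> G" and x: "x \<in> intI E - E"
  defines "a \<equiv> Sup {y \<in> E. y < x}" and "b \<equiv> Inf {y \<in> E. x < y}"
  shows "indicator_primitive G e x = indicator_primitive G e a + (x - a)"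
    and "indicator_primitive G e b = indicator_primitive G e a + (b - a)"
proof -
  have "a < x" "x < b" and gap: "{a<..<b} \<subseteq> G"
    using gap_endpoints[OF K x] G(2) by (auto simp: a_def b_def)
  then show "indicator_primitive G e x = indicator_primitive G e a + (x - a)"
    and "indicator_primitive G e b = indicator_primitive G e a + (b - a)"
    by (auto intro!: indicator_primitive_affine[OF G(1)])
qed

lemma Hbar_primitives_eq_on_intI:
  assumes K: "classK E" and G1: "G1 \<in> Hbar E" and G2: "G2 \<in> Hbar E"
    and eq: "\<And>x. x \<in> E \<Longrightarrow> indicator_primitive G1 e x = indicator_primitive G2 e x"
    and x: "x \<in> intI E"
  shows "indicator_primitive G1 e x = indicator_primitive G2 e x"
proof (cases "x \<in> E")
  case False
  then have "x \<in> intI E - E" using x by blast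
  moreover have "Sup {y \<in> E. y < x} \<in> E"
    using gap_endpoints[OF K calculation] by blast
  ultimately show ?thesis
    using G1 G2 eq indicator_primitive_on_gap(1)[OF K] by (simp add: Hbar_def)
qed (use eq in blast)

lemma ext_scale_eq_indicator_primitive:
  assumes K: "classK E" and G: "G \<in> Hbar E" and e: "e \<in> E"
    and rep: "\<And>x. x \<in> E \<Longrightarrow> s x = s e + indicator_primitive G e x"
    and x: "x \<in> intI E"
  shows "ext_scale E s x = s e + indicator_primitive G e x"
proof (cases "x \<in> E")
  case True
  then show ?thesis
    using rep by (simp add: ext_scale_def)
next
  case False
  then have gap: "x \<in> intI E - E" using x by blast
  define a b where "a = Sup {y \<in> E. y < x}" and "b = Inf {y \<in> E. x < y}"
  have ab: "a \<in> E" "b \<in> E" "a < x" "x < b"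
    using gap_endpoints[OF K gap] by (auto simp: a_def b_def)
  have G_meas: "G \<in> sets lebesgue" "intI E - E \<subseteq> G"
    using G by (auto simp: Hbar_def)
  have "s b - s a = b - a"
    using rep[OF ab(1)] rep[OF ab(2)] indicator_primitive_on_gap(2)[OF K G_meas gap, of e]
    by (simp add: a_def b_def)
  then have "ext_scale E s x = s a + (x - a)"
    using False ab by (simp add: ext_scale_def Let_def a_def[symmetric] b_def[symmetric])
  also have "\<dots> = s e + indicator_primitive G e x"
    using rep[OF ab(1)] indicator_primitive_on_gap(1)[OF K G_meas gap, of e] by (simp add: a_def)
  finally show ?thesis .
qed

lemma ae_eq_if_Hc_primitives_eq:
  assumes K: "classK E" and G1: "G1 \<in> Hc E" and G2: "G2 \<in> Hc E"
    and eq: "\<And>x. x \<in> E \<Longrightarrow>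
      indicator_primitive (G1 \<union> (intI E - E)) e x = indicator_primitive (G2 \<union> (intI E - E)) e x"
  shows "ae_eq G1 G2"
proof -
  obtain H1 H2 where H: "H1 \<in> Hbar E" "H2 \<in> Hbar E" "G1 = H1 \<inter> E" "G2 = H2 \<inter> E"
    using G1 G2 by (auto simp: Hc_def)
  then have "G1 \<union> (intI E - E) = H1" "G2 \<union> (intI E - E) = H2"
    using Hbar_Int_Un_gaps by blast+
  then have "ae_eq H1 H2"
    using eq Hbar_primitives_eq_on_intI[OF K H(1,2)] by (intro ae_eq_if_Hbar_primitives_eq[OF H(1,2)]) auto
  then show ?thesis
    using H(3,4) ae_eq_Int by blast
qed

lemma Sc_iff_indicator_primitive:
  assumes K: "classK E" and e: "e \<in> E"
  shows "s \<in> Sc E \<longleftrightarrow>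
    (\<exists>G \<in> Hc E. (\<forall>x \<in> E. s x = s e + indicator_primitive (G \<union> (intI E - E)) e x) \<and>
       (\<forall>G' \<in> Hc E. (\<forall>x \<in> E. s x = s e + indicator_primitive (G' \<union> (intI E - E)) e x) \<longrightarrow> ae_eq G' G))"
proof
  assume "s \<in> Sc E"
  then obtain sb where sb: "sb \<in> Sbar E" and s_sb: "\<And>x. x \<in> E \<Longrightarrow> s x = sb x"
    by (auto simp: Sc_def)
  obtain Gb where Gb: "Gb \<in> Hbar E" and rep: "\<And>x. x \<in> intI E \<Longrightarrow> sb x = sb e + indicator_primitive Gb e x"
    using Sbar_imp_indicator_primitive[OF sb] e E_subset_intI by blast
  have G: "Gb \<inter> E \<in> Hc E" "(Gb \<inter> E) \<union> (intI E - E) = Gb"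
    using Gb Hbar_Int_Un_gaps by (auto simp: Hc_def)
  have rep_E: "s x = s e + indicator_primitive Gb e x" if "x \<in> E" for x
    using that e rep[of x] s_sb E_subset_intI by auto
  then have "ae_eq G' (Gb \<inter> E)"
    if "G' \<in> Hc E" "\<forall>x \<in> E. s x = s e + indicator_primitive (G' \<union> (intI E - E)) e x" for G'
    using that G by (intro ae_eq_if_Hc_primitives_eq[OF K]) auto
  then show "\<exists>G \<in> Hc E. (\<forall>x \<in> E. s x = s e + indicator_primitive (G \<union> (intI E - E)) e x) \<and>
       (\<forall>G' \<in> Hc E. (\<forall>x \<in> E. s x = s e + indicator_primitive (G' \<union> (intI E - E)) e x) \<longrightarrow> ae_eq G' G)"
    using rep_E G by (intro bexI[of _ "Gb \<inter> E"]) auto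
next
  assume "\<exists>G \<in> Hc E. (\<forall>x \<in> E. s x = s e + indicator_primitive (G \<union> (intI E - E)) e x) \<and>
       (\<forall>G' \<in> Hc E. (\<forall>x \<in> E. s x = s e + indicator_primitive (G' \<union> (intI E - E)) e x) \<longrightarrow> ae_eq G' G)"
  then obtain G0 where G0: "G0 \<in> Hbar E" and rep: "\<And>x. x \<in> E \<Longrightarrow> s x = s e + indicator_primitive G0 e x"
    unfolding Hc_def using Hbar_Int_Un_gaps by force
  define sb where "sb x = s e + indicator_primitive G0 e x" for x
  have "sb \<in> Sbar E"
    using e E_subset_intI by (intro indicator_primitive_in_Sbar[OF K G0]) (auto simp: sb_def indicator_primitive_self)
  moreover have "\<forall>x \<in> E. s x = sb x"
    using rep by (simp add: sb_def)
  ultimately show "s \<in> Sc E"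
    unfolding Sc_def by blast
qed

lemma ae_eq_densities_of_ext_scale:
  assumes K: "classK E" and e: "e \<in> E"
    and ext: "\<And>x. x \<in> intI E \<Longrightarrow> sb x = ext_scale E s x"
    and G: "G \<in> Hc E" "\<And>x. x \<in> E \<Longrightarrow> s x = s e + indicator_primitive (G \<union> (intI E - E)) e x"
    and Gb: "Gb \<in> Hbar E" "\<And>x. x \<in> intI E \<Longrightarrow> sb x = sb e + indicator_primitive Gb e x"
  shows "ae_eq Gb (G \<union> (intI E - E))" "ae_eq G (Gb \<inter> E)"
proof -
  obtain G0 where G0: "G0 \<in> Hbar E" "G = G0 \<inter> E"
    using G(1) by (auto simp: Hc_def)
  then have G_un: "G \<union> (intI E - E) = G0"
    using Hbar_Int_Un_gaps by blast
  have eI: "e \<in> intI E"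
    using e E_subset_intI by blast
  have "sb e = s e"
    using ext[OF eI] e by (simp add: ext_scale_def)
  then have "indicator_primitive Gb e x = indicator_primitive G0 e x" if "x \<in> intI E" for x
    using Gb(2)[OF that] ext[OF that] ext_scale_eq_indicator_primitive[OF K G0(1) e _ that] G(2)
    by (simp add: G_un)
  then have "ae_eq Gb G0"
    by (rule ae_eq_if_Hbar_primitives_eq[OF Gb(1) G0(1)])
  then show "ae_eq Gb (G \<union> (intI E - E))" "ae_eq G (Gb \<inter> E)"
    using G_un G0(2) ae_eq_Int[OF ae_eq_sym] by auto
qed

theorem lemma5p1:
  fixes E :: "real set"
  assumes "classK E"
  shows
   "(\<forall>e \<in> E. \<forall>s. s \<in> Sc E \<longleftrightarrow>
       (\<exists>G \<in> Hc E.
          (\<forall>x \<in> E. s x = s e + (LINT y=ereal e..ereal x|lebesgue. indicator (G \<union> (intI E - E)) y)) \<and>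
          (\<forall>G' \<in> Hc E.
             (\<forall>x \<in> E. s x = s e + (LINT y=ereal e..ereal x|lebesgue. indicator (G' \<union> (intI E - E)) y))
             \<longrightarrow> ae_eq G' G))) \<and>
    (\<forall>e \<in> intI E. \<forall>sb. sb \<in> Sbar E \<longleftrightarrow>
       (\<exists>Gb \<in> Hbar E.
          (\<forall>x \<in> intI E. sb x = sb e + (LINT y=ereal e..ereal x|lebesgue. indicator Gb y)) \<and>
          (\<forall>Gb' \<in> Hbar E.
             (\<forall>x \<in> intI E. sb x = sb e + (LINT y=ereal e..ereal x|lebesgue. indicator Gb' y))
             \<longrightarrow> ae_eq Gb' Gb))) \<and>
    (\<forall>e \<in> E. \<forall>s sb G Gb.
       s \<in> Sc E \<and> sb \<in> Sbar E \<and> (\<forall>x \<in> intI E. sb x = ext_scale E s x) \<and>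
       G \<in> Hc E \<and>
       (\<forall>x \<in> E. s x = s e + (LINT y=ereal e..ereal x|lebesgue. indicator (G \<union> (intI E - E)) y)) \<and>
       Gb \<in> Hbar E \<and>
       (\<forall>x \<in> intI E. sb x = sb e + (LINT y=ereal e..ereal x|lebesgue. indicator Gb y))
       \<longrightarrow> ae_eq Gb (G \<union> (intI E - E)) \<and> ae_eq G (Gb \<inter> E))"
proof (intro conjI)
  show "\<forall>e \<in> E. \<forall>s sb G Gb. s \<in> Sc E \<and> sb \<in> Sbar E \<and> (\<forall>x \<in> intI E. sb x = ext_scale E s x) \<and>
      G \<in> Hc E \<and> (\<forall>x \<in> E. s x = s e + indicator_primitive (G \<union> (intI E - E)) e x) \<and>
      Gb \<in> Hbar E \<and> (\<forall>x \<in> intI E. sb x = sb e + indicator_primitive Gb e x)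
      \<longrightarrow> ae_eq Gb (G \<union> (intI E - E)) \<and> ae_eq G (Gb \<inter> E)"
    using ae_eq_densities_of_ext_scale[OF assms] by blast
qed (use Sc_iff_indicator_primitive[OF assms] Sbar_iff_indicator_primitive[OF assms] in blast)+

end
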